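(* The state $h$ on $U_n^{nc}$ defined below is tracial, and $h\star_T\phi=h$ for every tracial state $\phi$ on $U_n^{nc}$. Consequently $h$ is the Haar trace on $U\langle n\rangle$ for the tensor convolution.
   Context: $U_n^{nc}$ is the universal unital $*$-algebra generated by $u_{ij}$ ($1\le i,j\le n$) with $\sum_ku_{ki}^*u_{kj}=\delta_{ij}=\sum_ku_{ik}u_{jk}^*$, with $\Delta(u_{ij})=\sum_ku_{ik}^{(1)}u_{kj}^{(2)}$ into the free product $U_n^{nc}\sqcup U_n^{nc}$, $\delta(u_{ij})=\delta_{ij}$. Tensor convolution: $\phi\star_T\psi=(\phi\otimes\psi)\circ\Delta$, where $\phi\otimes\psi$ is the unital functional on $U_n^{nc}\sqcup U_n^{nc}$ such that for $A_i\in\ker\delta$ in factor $\epsilon_i\in\{1,2\}$, $\epsilon_i\ne\epsilon_{i+1}$, $(\phi\otimes\psi)(A_1\cdots A_m)=\phi(\prod_{\epsilon_i=1}A_i)\psi(\prod_{\epsilon_i=2}A_i)$ (ordered products); equivalently $\phi\star_T\psi(u^{\epsilon_1}_{i_1j_1}\cdots u^{\epsilon_r}_{i_rj_r})=\sum_{k_1,\dots,k_r}\phi(u^{\epsilon_1}_{i_1k_1}\cdots u^{\epsilon_r}_{i_rk_r})\psi(u^{\epsilon_1}_{k_1j_1}\cdots u^{\epsilon_r}_{k_rj_r})$. A state is tracial if $\phi(ab)=\phi(ba)$; the tensor Haar trace is a tracial state $h$ with $\phi\star_Th=h=h\star_T\phi$ for all tracial $\phi$. Definition of $h$: let $H=\ell^2(\mathbb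 Z)\otimes\bigotimes_{k\in\mathbb Z}M_n(\mathbb C)$ ($M_n(\mathbb C)$ with inner product $\mathrm{Tr}(A^*B)/n$, infinite tensor product with reference vector $I_n$); $U_{ij}(\delta_k\otimes(\cdots\otimes M_k\otimes\cdots))=\delta_{k+1}\otimes(\cdots\otimes E_{ji}M_k\otimes\cdots)$ (factor at position $k$ multiplied), $U_{ij}^*(\delta_k\otimes(\cdots\otimes M_{k-1}\otimes\cdots))=\delta_{k-1}\otimes(\cdots\otimes E_{ij}M_{k-1}\otimes\cdots)$; $j(u_{ij})=U_{ij}$ extends to a unital $*$-homomorphism $U_n^{nc}\to B(H)$; $h(a)=\langle\Omega,j(a)\Omega\rangle$ with $\Omega=\delta_0\otimes\bigotimes_kI_n$. *)

theory Defs
  imports "HOL-Analysis.Analysis"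
begin

text \<open>Letters of the free *-algebra on generators u_ij (indices in the finite type 'n, so
  n = CARD('n)): (i, j, False) stands for u_ij and (i, j, True) for u_ij^*.
  A word is a monomial; a functional on U_n^nc is given by its values on words.\<close>

type_synonym 'n letter = "'n \<times> 'n \<times> bool"
type_synonym 'n word = "'n letter list"
type_synonym 'n functional = "'n word \<Rightarrow> complex"

definition wstar :: "'n word \<Rightarrow> 'n word" where
  "wstar w = rev (map (\<lambda>(i, j, b). (i, j, \<not> b)) w)"

text \<open>Noncommutative polynomials: finitely supported functions word => complex.\<close>

definition nc_mult :: "('n word \<Rightarrow> complex) \<Rightarrow> ('n word \<Rightarrow> complex) \<Rightarrow> 'n word \<Rightarrow> complex" where
  "nc_mult p q w = (\<Sum>k\<in>{0..length w}. p (take k w) * q (drop k w))"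

definition nc_star :: "('n word \<Rightarrow> complex) \<Rightarrow> 'n word \<Rightarrow> complex" where
  "nc_star p w = cnj (p (wstar w))"

definition ext_fun :: "'n functional \<Rightarrow> ('n word \<Rightarrow> complex) \<Rightarrow> complex" where
  "ext_fun \<phi> p = (\<Sum>w\<in>{w. p w \<noteq> 0}. p w * \<phi> w)"

text \<open>The functional vanishes on the two-sided ideal generated by the unitarity relations
  sum_k u_ki^* u_kj = delta_ij = sum_k u_ik u_jk^*, i.e. it is a functional on U_n^nc.\<close>

definition respects_relations :: "('n::finite) functional \<Rightarrow> bool" where
  "respects_relations \<phi> \<longleftrightarrow>
     (\<forall>a b i j.
        (\<Sum>k\<in>UNIV. \<phi> (a @ [(k, i, True), (k, j, False)] @ b)) = (if i = j then \<phi> (a @ b) else 0)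
      \<and> (\<Sum>k\<in>UNIV. \<phi> (a @ [(i, k, False), (j, k, True)] @ b)) = (if i = j then \<phi> (a @ b) else 0))"

definition is_state :: "('n::finite) functional \<Rightarrow> bool" where
  "is_state \<phi> \<longleftrightarrow> respects_relations \<phi> \<and> \<phi> [] = 1 \<and>
     (\<forall>p. finite {w. p w \<noteq> 0} \<longrightarrow>
        Im (ext_fun \<phi> (nc_mult (nc_star p) p)) = 0 \<and> Re (ext_fun \<phi> (nc_mult (nc_star p) p)) \<ge> 0)"

text \<open>Traciality phi(ab) = phi(ba); by linearity it suffices to check it on monomials.\<close>

definition tracial :: "'n functional \<Rightarrow> bool" where
  "tracial \<phi> \<longleftrightarrow> (\<forall>a b. \<phi> (a @ b) = \<phi> (b @ a))"

definition tconv :: "('n::finite) functional \<Rightarrow> 'n functional \<Rightarrow> 'n functional" where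
  "tconv \<phi> \<psi> w = (\<Sum>ks\<in>{ks. length ks = length w}.
      \<phi> (map2 (\<lambda>(i, j, e) k. (i, k, e)) w ks) * \<psi> (map2 (\<lambda>(i, j, e) k. (k, j, e)) w ks))"

definition is_tensor_haar_trace :: "('n::finite) functional \<Rightarrow> bool" where
  "is_tensor_haar_trace h \<longleftrightarrow> is_state h \<and> tracial h \<and>
     (\<forall>\<phi>. is_state \<phi> \<and> tracial \<phi> \<longrightarrow> tconv \<phi> h = h \<and> tconv h \<phi> = h)"

text \<open>The model: vectors delta_k (x) (tensor of matrices M_m, all but finitely many = I_n).\<close>

definition matunit :: "'n::finite \<Rightarrow> 'n \<Rightarrow> complex^'n^'n" where
  "matunit a b = (\<chi> x y. if x = a \<and> y = b then 1 else 0)"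

definition mtrace :: "complex^'n^'n \<Rightarrow> complex" where
  "mtrace A = (\<Sum>i\<in>UNIV. A $ i $ i)"

fun model_step :: "('n::finite) letter \<Rightarrow> int \<times> (int \<Rightarrow> complex^'n^'n) \<Rightarrow> int \<times> (int \<Rightarrow> complex^'n^'n)" where
  "model_step (i, j, False) (k, M) = (k + 1, M(k := matunit j i ** M k))"
| "model_step (i, j, True) (k, M) = (k - 1, M(k - 1 := matunit i j ** M (k - 1)))"

text \<open>j(w) Omega for Omega = delta_0 (x) (I_n everywhere); operators act right to left.\<close>

definition model_vec :: "('n::finite) word \<Rightarrow> int \<times> (int \<Rightarrow> complex^'n^'n)" where
  "model_vec w = foldr model_step w (0, \<lambda>_. mat 1)"

text \<open>h(w) = <Omega, j(w) Omega>, with the normalised inner product Tr(A^* B)/n on each factor.\<close>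

definition haar_h :: "('n::finite) functional" where
  "haar_h w = (case model_vec w of (k, M) \<Rightarrow>
     if k = 0 then (\<Prod>m\<in>{m. M m \<noteq> mat 1}. mtrace (M m) / of_nat CARD('n)) else 0)"

end

theory Submission
  imports Defs
begin

(* Write j(w) Omega as delta_k (x) (a tensor of matrices): each letter u_ij raises the level k by
   one and multiplies the factor it leaves by E_ji, each u_ij^* lowers it and multiplies the factor it
   enters by E_ij. Hence h(w) = 0 unless w has degree 0, and then h(w) is a product of normalised
   traces of finitely many factors. Traciality comes from shifting all levels together with
   tr(AB) = tr(BA), the unitarity relations from sum_k E_kk = 1, and positivity from the fact that
   h(v^* w) is a Gram matrix built from the entries of the factors.

   For h *_T phi, rotate w (both functionals are tracial) into a Dyck word. The inner index k of a
   matched pair u^*_{i'k'} ... u_{ik} must satisfy k = k' in h, and h does not depend on it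
   otherwise, so the sum over it runs through phi alone, where the unitarity relation contracts
   u^*_{kj'} u_{kj} to delta_{jj'}. Contracting the pairs innermost first leaves h(w). The identity
   phi *_T h = h follows by the anti-automorphism u_ij -> u_ji, which reverses tensor convolution
   and fixes h. *)

lemma matunit_mult:
  "matunit a b ** matunit c d = (if b = c then matunit a d else (0::complex^'n::finite^'n))"
proof -
  have "(\<Sum>z\<in>UNIV. (if x = a \<and> z = b then 1 else 0) * (if z = c \<and> y = d then 1 else 0))
      = (if x = a \<and> b = c \<and> y = d then 1 else (0::complex))" for x y
    by (subst sum.cong[OF refl, where h = "\<lambda>z. if z = b then (if x = a \<and> b = c \<and> y = d then 1 else 0) else 0"])
      auto
  then show ?thesis
    by (simp add: matunit_def matrix_matrix_mult_def vec_eq_iff)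
qed

lemma mtrace_eq_trace: "mtrace = trace"
  by (simp add: fun_eq_iff mtrace_def trace_def)

lemma mat_1_neq_0: "(mat 1 :: complex^'n^'n) \<noteq> 0"
proof
  assume "(mat 1 :: complex^'n^'n) = 0"
  then have "(mat 1 :: complex^'n^'n) $ undefined $ undefined = 0" by simp
  then show False by (simp add: mat_def)
qed

lemma trace_mult_matunit_diag: "trace (X ** matunit k k) = X $ k $ (k::'n::finite)"
proof -
  have "(X ** matunit k k) $ i $ i = (if i = k then X $ k $ k else 0)" for i
    by (simp add: matrix_matrix_mult_def matunit_def if_distrib if_distribR cong: if_cong)
  then show ?thesis by (simp add: trace_def)
qed

lemma sum_trace_unitarity:
  "(\<Sum>k\<in>UNIV. trace (A ** ((matunit k i ** matunit j k) ** B))) =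
     (if i = j then trace (A ** B) else (0::complex))"
proof -
  have diag: "trace (A ** ((matunit k i ** matunit j k) ** B)) = (if i = j then (B ** A) $ k $ k else 0)" for k
  proof (cases "i = j")
    case True
    have "trace (A ** (matunit k k ** B)) = trace ((A ** matunit k k) ** B)"
      by (simp only: matrix_mul_assoc)
    also have "\<dots> = trace (B ** (A ** matunit k k))"
      by (rule trace_mul_sym)
    also have "\<dots> = (B ** A) $ k $ k"
      by (simp only: matrix_mul_assoc trace_mult_matunit_diag)
    finally show ?thesis using True by (simp add: matunit_mult)
  qed (simp add: matunit_mult trace_def)
  have "trace (A ** B) = (\<Sum>k\<in>UNIV. (B ** A) $ k $ k)"
    by (subst trace_mul_sym) (simp add: trace_def)
  then show ?thesis by (simp only: diag) (simp add: if_distrib cong: if_cong)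
qed

lemma transpose_matunit: "transpose (matunit a b) = matunit b a"
  by (auto simp: transpose_def matunit_def vec_eq_iff)

lemma trace_transpose: "trace (transpose A) = trace A"
  by (simp add: trace_def transpose_def)

lemma transpose_eq_mat_1 [simp]: "transpose X = mat 1 \<longleftrightarrow> X = (mat 1 :: complex^'n^'n)"
  by (metis transpose_mat transpose_transpose)

definition mat_adjoint :: "complex^'n^'m \<Rightarrow> complex^'m^'n" where
  "mat_adjoint A = (\<chi> i j. cnj (A $ j $ i))"

lemma mat_adjoint_mult: "mat_adjoint (A ** B) = mat_adjoint B ** mat_adjoint (A :: complex^'n::finite^'m)"
  by (simp add: mat_adjoint_def matrix_matrix_mult_def vec_eq_iff mult.commute)

lemma mat_adjoint_1 [simp]: "mat_adjoint (mat 1 :: complex^'n^'n) = mat 1"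
  by (simp add: mat_adjoint_def mat_def vec_eq_iff)

lemma mat_adjoint_matunit: "mat_adjoint (matunit a b) = matunit b a"
  by (auto simp: mat_adjoint_def matunit_def vec_eq_iff)

lemma trace_mat_adjoint_mult:
  "trace (mat_adjoint A ** B) = (\<Sum>(x, y)\<in>UNIV \<times> UNIV. cnj (A $ y $ x) * B $ y $ x)"
  by (simp add: trace_def matrix_matrix_mult_def mat_adjoint_def sum.cartesian_product)

definition trace_prod :: "(int \<Rightarrow> complex^('n::finite)^'n) \<Rightarrow> complex" where
  "trace_prod F = (\<Prod>m\<in>{m. F m \<noteq> mat 1}. trace (F m) / of_nat CARD('n))"

lemma trace_prod_superset:
  fixes F :: "int \<Rightarrow> complex^'n::finite^'n"
  assumes "finite S" "{m. F m \<noteq> mat 1} \<subseteq> S"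
  shows "trace_prod F = (\<Prod>m\<in>S. trace (F m) / of_nat CARD('n))"
  unfolding trace_prod_def
  by (rule prod.mono_neutral_left) (use assms in \<open>auto simp: trace_I\<close>)

lemma trace_prod_eq_0:
  fixes F :: "int \<Rightarrow> complex^'n::finite^'n"
  assumes "finite {m. F m \<noteq> mat 1}" "F p = 0"
  shows "trace_prod F = 0"
  unfolding trace_prod_def
  by (rule prod_zero[OF assms(1)], rule bexI[of _ p]) (use assms mat_1_neq_0 in \<open>auto simp: trace_def\<close>)

lemma trace_prod_shift: "trace_prod (\<lambda>m. F (m + t)) = trace_prod F"
  unfolding trace_prod_def
  by (rule prod.reindex_bij_witness[of _ "\<lambda>m. m - t" "\<lambda>m. m + t"]) auto

lemma trace_prod_commute:
  fixes A B :: "int \<Rightarrow> complex^'n::finite^'n"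
  assumes "finite {m. A m \<noteq> mat 1}" "finite {m. B m \<noteq> mat 1}"
  shows "trace_prod (\<lambda>m. A m ** B m) = trace_prod (\<lambda>m. B m ** A m)"
proof -
  let ?S = "{m. A m \<noteq> mat 1} \<union> {m. B m \<noteq> mat 1}"
  have "finite ?S" using assms by simp
  then have "trace_prod (\<lambda>m. X m ** Y m) = (\<Prod>m\<in>?S. trace (X m ** Y m) / of_nat CARD('n))"
    if "X = A \<and> Y = B \<or> X = B \<and> Y = A" for X Y
    by (rule trace_prod_superset) (use that in auto)
  then show ?thesis by (simp add: trace_mul_sym[of "A m" "B m" for m])
qed

lemma trace_prod_update:
  fixes F :: "int \<Rightarrow> complex^'n::finite^'n"
  assumes "finite {m. F m \<noteq> mat 1}"
  shows "trace_prod (F(p := Z)) =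
    trace Z / of_nat CARD('n) * (\<Prod>m\<in>{m. F m \<noteq> mat 1} - {p}. trace (F m) / of_nat CARD('n))"
proof -
  let ?S = "insert p {m. F m \<noteq> mat 1}"
  have "trace_prod (F(p := Z)) = (\<Prod>m\<in>?S. trace ((F(p := Z)) m) / of_nat CARD('n))"
    by (rule trace_prod_superset) (use assms in auto)
  also have "\<dots> = trace Z / of_nat CARD('n) * (\<Prod>m\<in>?S - {p}. trace (F m) / of_nat CARD('n))"
    using assms by (simp add: prod.insert_remove)
  finally show ?thesis by simp
qed

lemma sum_trace_prod_update:
  fixes F :: "int \<Rightarrow> complex^'n::finite^'n"
  assumes "finite {m. F m \<noteq> mat 1}" "finite K" "(\<Sum>k\<in>K. trace (X k)) = trace Y"
  shows "(\<Sum>k\<in>K. trace_prod (F(p := X k))) = trace_prod (F(p := Y))"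
  unfolding trace_prod_update[OF assms(1)]
  by (simp only: sum_distrib_right[symmetric] sum_divide_distrib[symmetric] assms(3))

lemma sum_trace_prod_unitarity:
  fixes A B :: "int \<Rightarrow> complex^'n::finite^'n"
  assumes "finite {m. A m \<noteq> mat 1}" "finite {m. B m \<noteq> mat 1}"
  defines "F \<equiv> \<lambda>m. A m ** B m"
  shows "(\<Sum>k\<in>UNIV. trace_prod (F(p := A p ** ((matunit k i ** matunit j k) ** B p)))) =
    (if i = j then trace_prod F else 0)"
proof -
  have fin: "finite {m. F m \<noteq> mat 1}"
    by (rule finite_subset[of _ "{m. A m \<noteq> mat 1} \<union> {m. B m \<noteq> mat 1}"])
      (use assms in \<open>auto simp: F_def\<close>)
  have "(\<Sum>k\<in>UNIV. trace_prod (F(p := A p ** ((matunit k i ** matunit j k) ** B p)))) =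
      trace_prod (F(p := if i = j then F p else 0))"
    by (rule sum_trace_prod_update[OF fin]) (simp_all add: sum_trace_unitarity F_def trace_0[unfolded mat_0])
  also have "\<dots> = (if i = j then trace_prod F else 0)"
  proof (cases "i = j")
    case False
    have "finite {m. (F(p := 0)) m \<noteq> mat 1}"
      by (rule finite_subset[of _ "insert p {m. F m \<noteq> mat 1}"]) (use fin in auto)
    with False show ?thesis by (simp add: trace_prod_eq_0[where p = p])
  qed simp
  finally show ?thesis .
qed

definition entry_prod :: "int set \<Rightarrow> (int \<Rightarrow> complex^'n^'n) \<Rightarrow> (int \<Rightarrow> 'n \<times> 'n) \<Rightarrow> complex" where
  "entry_prod S A g = (\<Prod>m\<in>S. A m $ snd (g m) $ fst (g m))"

lemma trace_prod_adjoint_mult: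
  fixes A B :: "int \<Rightarrow> complex^'n::finite^'n"
  assumes "finite S" "{m. A m \<noteq> mat 1} \<subseteq> S" "{m. B m \<noteq> mat 1} \<subseteq> S"
  shows "trace_prod (\<lambda>m. mat_adjoint (A m) ** B m) = of_real (1 / real CARD('n) ^ card S) *
    (\<Sum>g\<in>PiE S (\<lambda>_. UNIV). cnj (entry_prod S A g) * entry_prod S B g)"
proof -
  have "{m. mat_adjoint (A m) ** B m \<noteq> mat 1} \<subseteq> S"
  proof (rule subsetI, rule ccontr)
    fix m assume "m \<in> {m. mat_adjoint (A m) ** B m \<noteq> mat 1}" "m \<notin> S"
    moreover from \<open>m \<notin> S\<close> assms have "A m = mat 1" "B m = mat 1" by blast+
    ultimately show False by simp
  qed
  then have "trace_prod (\<lambda>m. mat_adjoint (A m) ** B m) =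
      (\<Prod>m\<in>S. trace (mat_adjoint (A m) ** B m)) / of_nat CARD('n) ^ card S"
    by (simp add: trace_prod_superset[OF assms(1)] prod_dividef)
  also have "(\<Prod>m\<in>S. trace (mat_adjoint (A m) ** B m)) =
      (\<Prod>m\<in>S. \<Sum>xy\<in>UNIV. cnj (A m $ snd xy $ fst xy) * B m $ snd xy $ fst xy)"
    by (simp add: trace_mat_adjoint_mult case_prod_beta)
  also have "\<dots> = (\<Sum>g\<in>PiE S (\<lambda>_. UNIV). \<Prod>m\<in>S. cnj (A m $ snd (g m) $ fst (g m)) * B m $ snd (g m) $ fst (g m))"
    by (rule prod_sum_PiE[OF assms(1)]) simp
  also have "\<dots> = (\<Sum>g\<in>PiE S (\<lambda>_. UNIV). cnj (entry_prod S A g) * entry_prod S B g)"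
    by (simp add: entry_prod_def prod.distrib)
  finally show ?thesis by (simp add: divide_inverse mult.commute)
qed

section \<open>The model as a walk on the integers\<close>

fun letter_deg :: "'n letter \<Rightarrow> int" where
  "letter_deg (i, j, e) = (if e then -1 else 1)"

definition word_deg :: "'n word \<Rightarrow> int" where
  "word_deg w = sum_list (map letter_deg w)"

lemma word_deg_simps [simp]:
  "word_deg [] = 0" "word_deg (l # w) = letter_deg l + word_deg w"
  "word_deg (v @ w) = word_deg v + word_deg w"
  by (simp_all add: word_deg_def)

lemma abs_word_deg_le_length: "\<bar>word_deg w\<bar> \<le> int (length w)"
  by (induction w) (auto simp: abs_le_iff)

fun letter_factor :: "('n::finite) letter \<Rightarrow> int \<Rightarrow> int \<Rightarrow> complex^'n^'n" where
  "letter_factor (i, j, e) h m =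
     (if e then (if m = h - 1 then matunit i j else mat 1)
      else (if m = h then matunit j i else mat 1))"

(* word_factors w k m is the matrix at position m of j(w) (delta_k (x) I), whose level is
   k + word_deg w (lemma foldr_model_step). *)
primrec word_factors :: "('n::finite) word \<Rightarrow> int \<Rightarrow> int \<Rightarrow> complex^'n^'n" where
  "word_factors [] k m = mat 1"
| "word_factors (l # w) k m = letter_factor l (k + word_deg w) m ** word_factors w k m"

lemma foldr_model_step:
  "foldr model_step w (k, M) = (k + word_deg w, \<lambda>m. word_factors w k m ** M m)"
proof (induction w)
  case (Cons l w)
  obtain i j e where "l = (i, j, e)" by (cases l)
  with Cons show ?case by (cases e) (auto simp: fun_eq_iff matrix_mul_assoc)
qed simp

lemma haar_h_eq: "haar_h w = (if word_deg w = 0 then trace_prod (word_factors w 0) else 0)"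
  by (simp add: haar_h_def model_vec_def foldr_model_step trace_prod_def mtrace_eq_trace)

lemma letter_factor_neq_1: "letter_factor l h m \<noteq> mat 1 \<Longrightarrow> m = h \<or> m = h - 1"
  by (cases l) (auto split: if_splits)

lemma word_factors_support:
  "{m. word_factors w k m \<noteq> mat 1} \<subseteq> {k - int (length w) .. k + int (length w)}"
proof (induction w)
  case (Cons l w)
  have "word_factors (l # w) k m = mat 1"
    if "m \<notin> {k - int (length (l # w)) .. k + int (length (l # w))}" for m
  proof -
    have "letter_factor l (k + word_deg w) m = mat 1"
      using letter_factor_neq_1 abs_word_deg_le_length[of w] that by fastforce
    moreover have "word_factors w k m = mat 1" using Cons that by auto
    ultimately show ?thesis by simp
  qed
  then show ?case by blast
qed simp

lemma finite_word_factors_support: "finite {m. word_factors w k m \<noteq> mat 1}"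
  by (rule finite_subset[OF word_factors_support]) simp

lemma word_factors_shift: "word_factors w (k + c) (m + c) = word_factors w k m"
proof (induction w)
  case (Cons l w)
  obtain i j e where "l = (i, j, e)" by (cases l)
  with Cons show ?case by (simp add: algebra_simps)
qed simp

lemma word_factors_append:
  "word_factors (v @ w) k m = word_factors v (k + word_deg w) m ** word_factors w k m"
  by (induction v) (auto simp: matrix_mul_assoc add.assoc)

lemma haar_h_append:
  "haar_h (v @ w) = (if word_deg v + word_deg w = 0
     then trace_prod (\<lambda>m. word_factors v (word_deg w) m ** word_factors w 0 m) else 0)"
proof -
  have "word_factors (v @ w) 0 = (\<lambda>m. word_factors v (word_deg w) m ** word_factors w 0 m)"
    by (rule ext) (rule word_factors_append[of v w 0, simplified])
  then show ?thesis by (simp add: haar_h_eq)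
qed

section \<open>Traciality, normalisation and the unitarity relations\<close>

lemma haar_h_commute: "haar_h (v @ w) = haar_h (w @ v)"
proof (cases "word_deg v + word_deg w = 0")
  case True
  define d where "d = word_deg v"
  have deg_w: "word_deg w = - d" using True by (simp add: d_def)
  have "haar_h (w @ v) = trace_prod (\<lambda>m. word_factors w 0 (m - d) ** word_factors v (- d) (m - d))"
    using True word_factors_shift[of w 0 d "m - d" for m] word_factors_shift[of v "- d" d "m - d" for m]
    by (simp add: haar_h_append d_def add.commute)
  also have "\<dots> = trace_prod (\<lambda>m. word_factors w 0 m ** word_factors v (- d) m)"
    using trace_prod_shift[where F = "\<lambda>m. word_factors w 0 m ** word_factors v (- d) m" and t = "- d"]
    by simp
  also have "\<dots> = trace_prod (\<lambda>m. word_factors v (- d) m ** word_factors w 0 m)"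
    by (rule trace_prod_commute[OF finite_word_factors_support finite_word_factors_support])
  also have "\<dots> = haar_h (v @ w)"
    using True by (simp add: haar_h_append deg_w)
  finally show ?thesis by simp
qed (simp add: haar_h_append add.commute)

lemma tracial_haar_h: "tracial haar_h"
  unfolding tracial_def by (blast intro: haar_h_commute)

lemma respects_relations_haar_h: "respects_relations haar_h"
  unfolding respects_relations_def
proof (intro allI conjI)
  fix a b :: "'n::finite word" and i j :: 'n
  define A where "A = word_factors a (word_deg b)"
  define B where "B = word_factors b 0"
  have factors:
    "word_factors (a @ (k, i, True) # (k, j, False) # b) 0 =
       (\<lambda>m. A m ** B m)(word_deg b := A (word_deg b) ** ((matunit k i ** matunit j k) ** B (word_deg b)))"
    "word_factors (a @ (i, k, False) # (j, k, True) # b) 0 =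
       (\<lambda>m. A m ** B m)(word_deg b - 1 := A (word_deg b - 1) ** ((matunit k i ** matunit j k) ** B (word_deg b - 1)))"
    "word_factors (a @ b) 0 = (\<lambda>m. A m ** B m)" for k
    by (auto simp: fun_eq_iff word_factors_append matrix_mul_assoc A_def B_def)
  note unitarity = sum_trace_prod_unitarity[OF finite_word_factors_support finite_word_factors_support,
      of a "word_deg b" b 0, folded A_def B_def]
  show "(\<Sum>k\<in>UNIV. haar_h (a @ [(k, i, True), (k, j, False)] @ b)) = (if i = j then haar_h (a @ b) else 0)"
    unfolding haar_h_eq append_Cons append_Nil factors using unitarity[of "word_deg b"] by simp
  show "(\<Sum>k\<in>UNIV. haar_h (a @ [(i, k, False), (j, k, True)] @ b)) = (if i = j then haar_h (a @ b) else 0)"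
    unfolding haar_h_eq append_Cons append_Nil factors using unitarity[of "word_deg b - 1"] by simp
qed

lemma haar_h_Nil: "haar_h [] = 1"
  by (simp add: haar_h_eq trace_prod_def)

section \<open>Positivity\<close>

lemma sum_sesquilinear_gram:
  fixes K :: "'a \<Rightarrow> 'a \<Rightarrow> complex" and X :: "'a \<Rightarrow> 'b \<Rightarrow> complex"
  assumes "finite V" "finite I"
    and "\<And>v w. v \<in> V \<Longrightarrow> w \<in> V \<Longrightarrow> K v w = of_real c * (\<Sum>i\<in>I. cnj (X v i) * X w i)"
  shows "(\<Sum>v\<in>V. \<Sum>w\<in>V. cnj (p v) * p w * K v w) =
    of_real (c * (\<Sum>i\<in>I. (cmod (\<Sum>w\<in>V. p w * X w i))\<^sup>2))"
proof -
  have "of_real (c * (\<Sum>i\<in>I. (cmod (\<Sum>w\<in>V. p w * X w i))\<^sup>2))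
      = of_real c * (\<Sum>i\<in>I. cnj (\<Sum>v\<in>V. p v * X v i) * (\<Sum>w\<in>V. p w * X w i))"
    by (simp only: of_real_mult of_real_sum complex_norm_square mult.commute)
  also have "\<dots> = of_real c * (\<Sum>i\<in>I. \<Sum>v\<in>V. \<Sum>w\<in>V. cnj (p v) * p w * (cnj (X v i) * X w i))"
    by (simp only: cnj_sum sum_product) (simp add: mult_ac)
  also have "\<dots> = (\<Sum>v\<in>V. \<Sum>w\<in>V. cnj (p v) * p w * K v w)"
    by (simp add: assms(3) sum_distrib_left sum.swap[of _ I] algebra_simps cong: sum.cong)
  finally show ?thesis by simp
qed

lemma ext_fun_superset:
  assumes "finite T" "{w. p w \<noteq> 0} \<subseteq> T"
  shows "ext_fun \<phi> p = (\<Sum>w\<in>T. p w * \<phi> w)"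
  unfolding ext_fun_def by (rule sum.mono_neutral_left) (use assms in auto)

lemma sum_take_drop:
  "(\<Sum>k\<in>{0..length x}. G (take k x) (drop k x)) = (\<Sum>(y, z)\<in>{(y, z). y @ z = x}. G y z)"
  by (rule sum.reindex_bij_witness[of _ "\<lambda>(y, z). length y" "\<lambda>k. (take k x, drop k x)"]) auto

lemma finite_append_preimage:
  assumes "finite T"
  shows "finite {(y, z). y @ z \<in> T}"
proof (rule finite_subset)
  show "{(y, z). y @ z \<in> T} \<subseteq> (\<Union>x\<in>T. (\<lambda>k. (take k x, drop k x)) ` {0..length x})"
  proof clarify
    fix y z assume "y @ z \<in> T"
    moreover have "(y, z) \<in> (\<lambda>k. (take k (y @ z), drop k (y @ z))) ` {0..length (y @ z)}"
      by (rule image_eqI[of _ _ "length y"]) auto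
    ultimately show "(y, z) \<in> (\<Union>x\<in>T. (\<lambda>k. (take k x, drop k x)) ` {0..length x})" by blast
  qed
qed (use assms in simp)

lemma ext_fun_nc_mult:
  assumes fP: "finite {v. p v \<noteq> 0}" and fQ: "finite {w. q w \<noteq> 0}"
  shows "ext_fun \<phi> (nc_mult p q) =
    (\<Sum>v\<in>{v. p v \<noteq> 0}. \<Sum>w\<in>{w. q w \<noteq> 0}. p v * q w * \<phi> (v @ w))"
proof -
  let ?P = "{v. p v \<noteq> 0}" and ?Q = "{w. q w \<noteq> 0}"
  let ?cat = "\<lambda>(v, w). v @ w" and ?f = "\<lambda>(v, w). p v * q w * \<phi> (v @ w)"
  define T where "T = ?cat ` (?P \<times> ?Q)"
  have fT: "finite T" using fP fQ by (simp add: T_def)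
  have "{x. nc_mult p q x \<noteq> 0} \<subseteq> T"
  proof
    fix x assume "x \<in> {x. nc_mult p q x \<noteq> 0}"
    then obtain k where "p (take k x) * q (drop k x) \<noteq> 0"
      unfolding nc_mult_def by (auto elim: sum.not_neutral_contains_not_neutral)
    then show "x \<in> T" unfolding T_def by (auto intro!: image_eqI[where x = "(take k x, drop k x)"])
  qed
  then have "ext_fun \<phi> (nc_mult p q) = (\<Sum>x\<in>T. nc_mult p q x * \<phi> x)"
    by (rule ext_fun_superset[OF fT])
  also have "\<dots> = (\<Sum>x\<in>T. \<Sum>vw\<in>{vw \<in> {(v, w). v @ w \<in> T}. ?cat vw = x}. ?f vw)"
  proof (rule sum.cong[OF refl])
    fix x assume "x \<in> T"
    then have fibre: "{vw \<in> {(v, w). v @ w \<in> T}. ?cat vw = x} = {(v, w). v @ w = x}" by auto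
    show "nc_mult p q x * \<phi> x = (\<Sum>vw\<in>{vw \<in> {(v, w). v @ w \<in> T}. ?cat vw = x}. ?f vw)"
      unfolding fibre nc_mult_def sum_distrib_right
        sum_take_drop[where G = "\<lambda>y z. p y * q z * \<phi> (y @ z)", symmetric] by simp
  qed
  also have "\<dots> = (\<Sum>vw\<in>{(v, w). v @ w \<in> T}. ?f vw)"
    by (rule sum.group[OF finite_append_preimage[OF fT] fT]) auto
  also have "\<dots> = (\<Sum>vw\<in>?P \<times> ?Q. ?f vw)"
    by (rule sum.mono_neutral_right) (use fT in \<open>auto simp: T_def finite_append_preimage\<close>)
  finally show ?thesis by (simp add: sum.cartesian_product)
qed

fun letter_star :: "'n letter \<Rightarrow> 'n letter" where
  "letter_star (i, j, e) = (i, j, \<not> e)"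

lemma wstar_Nil [simp]: "wstar [] = []"
  by (simp add: wstar_def)

lemma wstar_Cons [simp]: "wstar (l # v) = wstar v @ [letter_star l]"
  by (cases l) (simp add: wstar_def)

lemma wstar_append: "wstar (v @ w) = wstar w @ wstar v"
  by (simp add: wstar_def)

lemma wstar_wstar [simp]: "wstar (wstar v) = v"
  by (induction v) (auto simp: wstar_append)

lemma word_deg_wstar [simp]: "word_deg (wstar v) = - word_deg v"
proof (induction v)
  case (Cons l v) then show ?case by (cases l) auto
qed simp

lemma ext_fun_nc_star_mult:
  assumes "finite {v. p v \<noteq> 0}"
  shows "ext_fun \<phi> (nc_mult (nc_star p) p) =
    (\<Sum>v\<in>{v. p v \<noteq> 0}. \<Sum>w\<in>{w. p w \<noteq> 0}. cnj (p v) * p w * \<phi> (wstar v @ w))"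
proof -
  have supp: "{v. nc_star p v \<noteq> 0} = wstar ` {v. p v \<noteq> 0}"
    by (auto simp: nc_star_def intro!: image_eqI[where x = "wstar _"])
  have "ext_fun \<phi> (nc_mult (nc_star p) p) =
      (\<Sum>v\<in>wstar ` {v. p v \<noteq> 0}. \<Sum>w\<in>{w. p w \<noteq> 0}. nc_star p v * p w * \<phi> (v @ w))"
    using ext_fun_nc_mult[of "nc_star p" p] assms by (simp add: supp)
  also have "\<dots> = (\<Sum>v\<in>{v. p v \<noteq> 0}. \<Sum>w\<in>{w. p w \<noteq> 0}. nc_star p (wstar v) * p w * \<phi> (wstar v @ w))"
    by (rule sum.reindex_bij_witness[of _ wstar wstar]) auto
  finally show ?thesis by (simp add: nc_star_def)
qed

lemma letter_factor_star:
  "letter_factor (letter_star l) (h + letter_deg l) m = mat_adjoint (letter_factor l h m)"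
  by (cases l) (auto simp: mat_adjoint_matunit)

lemma word_factors_wstar: "word_factors (wstar v) (k + word_deg v) m = mat_adjoint (word_factors v k m)"
proof (induction v arbitrary: k)
  case (Cons l v)
  have "word_factors (wstar (l # v)) (k + word_deg (l # v)) m
      = word_factors (wstar v) (k + word_deg v) m ** letter_factor (letter_star l) (k + word_deg v + letter_deg l) m"
    by (cases l) (simp add: word_factors_append algebra_simps)
  also have "\<dots> = mat_adjoint (word_factors (l # v) k m)"
    by (simp add: Cons letter_factor_star mat_adjoint_mult)
  finally show ?case .
qed simp

lemma haar_h_wstar_append:
  "haar_h (wstar v @ w) = (if word_deg v = word_deg w
     then trace_prod (\<lambda>m. mat_adjoint (word_factors v 0 m) ** word_factors w 0 m) else 0)"
  using word_factors_wstar[of v 0] by (auto simp: haar_h_append)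

(* Indexing the Gram vectors also by the degree t makes the form vanish when the degrees of v and w
   differ, as haar_h (wstar v @ w) does. *)
definition gram_vector :: "int set \<Rightarrow> ('n::finite) word \<Rightarrow> int \<times> (int \<Rightarrow> 'n \<times> 'n) \<Rightarrow> complex" where
  "gram_vector S u = (\<lambda>(t, g). if word_deg u = t then entry_prod S (word_factors u 0) g else 0)"

lemma haar_h_wstar_append_gram:
  fixes v w :: "'n::finite word"
  assumes fS: "finite S" and "{m. word_factors v 0 m \<noteq> mat 1} \<subseteq> S" "{m. word_factors w 0 m \<noteq> mat 1} \<subseteq> S"
    and fT: "finite T" and "word_deg v \<in> T"
  shows "haar_h (wstar v @ w) = of_real (1 / real CARD('n) ^ card S) *
     (\<Sum>tg\<in>T \<times> PiE S (\<lambda>_. UNIV). cnj (gram_vector S v tg) * gram_vector S w tg)"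
proof -
  let ?X = "gram_vector S"
  let ?G = "PiE S (\<lambda>_. UNIV :: ('n \<times> 'n) set)"
  have "(\<Sum>tg\<in>T \<times> ?G. cnj (?X v tg) * ?X w tg) = (\<Sum>t\<in>T. \<Sum>g\<in>?G. cnj (?X v (t, g)) * ?X w (t, g))"
    by (simp add: sum.cartesian_product case_prod_beta)
  also have "\<dots> = (\<Sum>t\<in>T. if t = word_deg v then
      (if word_deg v = word_deg w
       then (\<Sum>g\<in>?G. cnj (entry_prod S (word_factors v 0) g) * entry_prod S (word_factors w 0) g) else 0)
      else 0)"
    by (rule sum.cong) (auto simp: gram_vector_def)
  finally have "(\<Sum>tg\<in>T \<times> ?G. cnj (?X v tg) * ?X w tg) = (if word_deg v = word_deg w then
      (\<Sum>g\<in>?G. cnj (entry_prod S (word_factors v 0) g) * entry_prod S (word_factors w 0) g) else 0)"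
    using fT assms(5) by simp
  then show ?thesis
    by (simp add: haar_h_wstar_append trace_prod_adjoint_mult[OF fS assms(2,3)])
qed

lemma is_state_haar_h: "is_state haar_h"
  unfolding is_state_def
proof (intro conjI allI impI respects_relations_haar_h haar_h_Nil)
  fix p :: "'n::finite word \<Rightarrow> complex"
  assume fV: "finite {w. p w \<noteq> 0}"
  define V where "V = {w. p w \<noteq> 0}"
  define L where "L = (\<Sum>v\<in>V. length v)"
  define S where "S = {- int L .. int L}"
  define T where "T = word_deg ` V"
  define c where "c = 1 / real CARD('n) ^ card S"
  have fS: "finite S" and fT: "finite T" using fV by (simp_all add: S_def T_def V_def)
  have supp: "{m. word_factors v 0 m \<noteq> mat 1} \<subseteq> S" if "v \<in> V" for v
  proof -
    have "length v \<le> L" unfolding L_def using fV that by (intro member_le_sum) (auto simp: V_def)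
    then show ?thesis using word_factors_support[of v 0] by (auto simp: S_def)
  qed
  have gram: "haar_h (wstar v @ w) = of_real c * (\<Sum>tg\<in>T \<times> PiE S (\<lambda>_. UNIV). cnj (gram_vector S v tg) * gram_vector S w tg)"
    if "v \<in> V" "w \<in> V" for v w
    unfolding c_def
    by (rule haar_h_wstar_append_gram[OF fS supp[OF that(1)] supp[OF that(2)] fT]) (use that in \<open>simp add: T_def\<close>)
  have fI: "finite (T \<times> PiE S (\<lambda>_. UNIV :: ('n \<times> 'n) set))" using fS fT by (simp add: finite_PiE)
  have e: "ext_fun haar_h (nc_mult (nc_star p) p) =
      of_real (c * (\<Sum>i\<in>T \<times> PiE S (\<lambda>_. UNIV). (cmod (\<Sum>w\<in>V. p w * gram_vector S w i))\<^sup>2))"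
    unfolding ext_fun_nc_star_mult[OF fV] V_def[symmetric]
    by (rule sum_sesquilinear_gram[OF _ fI gram]) (use fV V_def in auto)
  show "Im (ext_fun haar_h (nc_mult (nc_star p) p)) = 0" by (simp only: e Im_complex_of_real)
  show "Re (ext_fun haar_h (nc_mult (nc_star p) p)) \<ge> 0"
    by (simp only: e Re_complex_of_real) (simp add: c_def sum_nonneg)
qed

section \<open>Matched pairs in Dyck words\<close>

(* Operators act right to left: the rightmost u climbs one level, D1 stays above it and u^* returns. *)
inductive dyck :: "'n word \<Rightarrow> bool" where
  dyck_Nil: "dyck []"
| dyck_nest: "dyck D1 \<Longrightarrow> dyck D2 \<Longrightarrow> dyck (D2 @ [(a, b, True)] @ D1 @ [(c, d, False)])"

lemma dyck_word_deg: "dyck c \<Longrightarrow> word_deg c = 0"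
  by (induction rule: dyck.induct) auto

lemma dyck_factors_below: "dyck c \<Longrightarrow> m < k \<Longrightarrow> word_factors c k m = mat 1"
proof (induction c arbitrary: k rule: dyck.induct)
  case (dyck_nest D1 D2 a b c d)
  then show ?case by (simp add: word_factors_append dyck_word_deg)
qed simp

lemma dyck_append: "dyck b \<Longrightarrow> dyck a \<Longrightarrow> dyck (a @ b)"
proof (induction b rule: dyck.induct)
  case (dyck_nest D1 D2 x y u v)
  then have "dyck ((a @ D2) @ [(x, y, True)] @ D1 @ [(u, v, False)])"
    by (intro dyck.dyck_nest) auto
  then show ?case by simp
qed simp

lemma word_factors_matched_pair:
  assumes "dyck c"
  shows "word_factors (a @ (i', k', True) # c @ (i, k, False) # b) 0 m =
    (if m = word_deg b then word_factors a (word_deg b) m ** ((matunit i' k' ** matunit k i) ** word_factors b 0 m)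
     else word_factors a (word_deg b) m ** (word_factors c (word_deg b + 1) m ** word_factors b 0 m))"
  using dyck_word_deg[OF assms] dyck_factors_below[OF assms, of "word_deg b" "word_deg b + 1"]
  by (auto simp: word_factors_append matrix_mul_assoc algebra_simps)

lemma haar_h_matched_pair:
  assumes "dyck c"
  shows "haar_h (a @ (i', k', True) # c @ (i, k, False) # b) =
    (if k = k' then haar_h (a @ (i', l, True) # c @ (i, l, False) # b) else 0)"
proof (cases "k = k'")
  case True
  then have "word_factors (a @ (i', k', True) # c @ (i, k, False) # b) 0 =
      word_factors (a @ (i', l, True) # c @ (i, l, False) # b) 0"
    by (simp add: fun_eq_iff word_factors_matched_pair[OF assms] matunit_mult)
  with True show ?thesis by (simp add: haar_h_eq)
next
  case False
  then have "trace_prod (word_factors (a @ (i', k', True) # c @ (i, k, False) # b) 0) = 0"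
    by (intro trace_prod_eq_0[OF finite_word_factors_support, where p = "word_deg b"])
      (simp add: word_factors_matched_pair[OF assms] matunit_mult)
  with False show ?thesis by (simp add: haar_h_eq)
qed

lemma sum_haar_h_matched_pair:
  assumes rel: "respects_relations \<phi>" and "dyck c"
  shows "(\<Sum>k'\<in>UNIV. \<Sum>k\<in>UNIV. haar_h (a @ (i', k', True) # c @ (i, k, False) # b) *
            \<phi> (a' @ (k', j', True) # (k, j, False) # b'))
       = haar_h (a @ (i', j', True) # c @ (i, j, False) # b) * \<phi> (a' @ b')"
proof -
  define H where "H = haar_h (a @ (i', j, True) # c @ (i, j, False) # b)"
  have H: "haar_h (a @ (i', k', True) # c @ (i, k, False) # b) = (if k = k' then H else 0)" for k k'
    unfolding H_def by (rule haar_h_matched_pair[OF assms(2)])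
  have "(\<Sum>k'\<in>UNIV. \<Sum>k\<in>UNIV. haar_h (a @ (i', k', True) # c @ (i, k, False) # b) *
            \<phi> (a' @ (k', j', True) # (k, j, False) # b'))
      = (\<Sum>k'\<in>UNIV. H * \<phi> (a' @ [(k', j', True), (k', j, False)] @ b'))"
    by (simp add: H if_distrib if_distribR cong: if_cong)
  also have "\<dots> = H * (if j' = j then \<phi> (a' @ b') else 0)"
    using rel unfolding respects_relations_def by (simp add: sum_distrib_left[symmetric])
  also have "\<dots> = haar_h (a @ (i', j', True) # c @ (i, j, False) # b) * \<phi> (a' @ b')"
    using H[of j' j] by (simp add: H_def)
  finally show ?thesis .
qed

section \<open>Contracting matched pairs in the convolution\<close>

(* In partial_conv, a Free letter u_ij contributes u_ik to the argument of haar_h and u_kj to that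
   of phi, with k summed over; a Fixed letter goes to haar_h unchanged. *)
datatype 'n slot = Free "'n letter" | Fixed "'n letter"

fun count_free :: "'n slot list \<Rightarrow> nat" where
  "count_free [] = 0"
| "count_free (Free l # ws) = Suc (count_free ws)"
| "count_free (Fixed l # ws) = count_free ws"

fun fill_left :: "'n slot list \<Rightarrow> 'n list \<Rightarrow> 'n word" where
  "fill_left [] ks = []"
| "fill_left (Fixed l # ws) ks = l # fill_left ws ks"
| "fill_left (Free (i, j, e) # ws) ks = (i, hd ks, e) # fill_left ws (tl ks)"

fun fill_right :: "'n slot list \<Rightarrow> 'n list \<Rightarrow> 'n word" where
  "fill_right [] ks = []"
| "fill_right (Fixed l # ws) ks = fill_right ws ks"
| "fill_right (Free (i, j, e) # ws) ks = (hd ks, j, e) # fill_right ws (tl ks)"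

lemma count_free_append [simp]: "count_free (A @ B) = count_free A + count_free B"
proof (induction A)
  case (Cons s A) then show ?case by (cases s) auto
qed simp

lemma count_free_map [simp]: "count_free (map Fixed c) = 0" "count_free (map Free c) = length c"
  by (induction c) auto

lemma fill_append:
  "length ks = count_free A \<Longrightarrow> fill_left (A @ R) (ks @ ks') = fill_left A ks @ fill_left R ks'"
  "length ks = count_free A \<Longrightarrow> fill_right (A @ R) (ks @ ks') = fill_right A ks @ fill_right R ks'"
proof (induction A arbitrary: ks)
  case (Cons s A)
  {
    case 1
    show ?case
    proof (cases s)
      case (Free l)
      with 1 Cons(1)[of "tl ks"] show ?thesis by (cases l, cases ks) auto
    qed (use 1 Cons(1) in simp)
  next
    case 2
    show ?case
    proof (cases s)
      case (Free l)
      with 2 Cons(2)[of "tl ks"] show ?thesis by (cases l, cases ks) auto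
    qed (use 2 Cons(2) in simp)
  }
qed simp_all

lemma fill_map_Fixed [simp]:
  "fill_left (map Fixed c @ R) ks = c @ fill_left R ks" "fill_right (map Fixed c @ R) ks = fill_right R ks"
  "fill_left (map Fixed c) ks = c" "fill_right (map Fixed c) ks = []"
  by (induction c) auto

abbreviation with_second_index :: "'n letter \<Rightarrow> 'n \<Rightarrow> 'n letter" where
  "with_second_index \<equiv> \<lambda>(i, j, e) k. (i, k, e)"

abbreviation with_first_index :: "'n letter \<Rightarrow> 'n \<Rightarrow> 'n letter" where
  "with_first_index \<equiv> \<lambda>(i, j, e) k. (k, j, e)"

lemma fill_map_Free:
  "length ks = length w \<Longrightarrow>
     fill_left (map Free w) ks = map2 with_second_index w ks \<and>
     fill_right (map Free w) ks = map2 with_first_index w ks"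
proof (induction w arbitrary: ks)
  case (Cons l w)
  then show ?case by (cases l, cases ks) auto
qed simp

lemma sum_lists_length_Suc:
  "(\<Sum>ks\<in>{ks. length ks = Suc n}. f ks) = (\<Sum>k\<in>(UNIV::'a::finite set). \<Sum>ks\<in>{ks. length ks = n}. f (k # ks))"
proof -
  have "(\<Sum>ks\<in>{ks. length ks = Suc n}. f ks) = (\<Sum>(k, ks)\<in>UNIV \<times> {ks. length ks = n}. f (k # ks))"
    by (rule sum.reindex_bij_witness[of _ "\<lambda>(k, ks). k # ks" "\<lambda>ks. (hd ks, tl ks)"])
      (auto simp: length_Suc_conv)
  then show ?thesis by (simp add: sum.cartesian_product)
qed

lemma sum_lists_length_add:
  "(\<Sum>ks\<in>{ks. length ks = a + b}. f ks) =
   (\<Sum>xs\<in>{xs. length xs = a}. \<Sum>ys\<in>{ys. length ys = b}. f (xs @ (ys :: 'a::finite list)))"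
proof (induction a arbitrary: f)
  case 0
  have "{xs :: 'a list. length xs = 0} = {[]}" by auto
  then show ?case by simp
next
  case (Suc a)
  then show ?case by (simp add: sum_lists_length_Suc)
qed

definition partial_conv :: "('n::finite) functional \<Rightarrow> 'n slot list \<Rightarrow> complex" where
  "partial_conv \<phi> ws = (\<Sum>ks\<in>{ks. length ks = count_free ws}. haar_h (fill_left ws ks) * \<phi> (fill_right ws ks))"

lemma partial_conv_Fixed: "\<phi> [] = 1 \<Longrightarrow> partial_conv \<phi> (map Fixed w) = haar_h w"
  by (simp add: partial_conv_def)

lemma partial_conv_Free: "partial_conv \<phi> (map Free w) = tconv haar_h \<phi> w"
  unfolding partial_conv_def tconv_def by (rule sum.cong) (auto simp: fill_map_Free)

lemma partial_conv_fix_pair: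
  assumes "respects_relations \<phi>" and "dyck c"
  shows "partial_conv \<phi> (A @ Free (i', j', True) # map Fixed c @ Free (i, j, False) # B) =
         partial_conv \<phi> (A @ Fixed (i', j', True) # map Fixed c @ Fixed (i, j, False) # B)"
  (is "partial_conv \<phi> ?L = partial_conv \<phi> ?R")
proof -
  have count_L: "count_free ?L = count_free A + Suc (Suc (count_free B))" by simp
  have count_R: "count_free ?R = count_free A + count_free B" by simp
  have "partial_conv \<phi> ?L = (\<Sum>ks\<in>{ks. length ks = count_free A}. \<Sum>ks'\<in>{ks. length ks = Suc (Suc (count_free B))}.
      haar_h (fill_left ?L (ks @ ks')) * \<phi> (fill_right ?L (ks @ ks')))"
    unfolding partial_conv_def count_L by (rule sum_lists_length_add)
  also have "\<dots> = (\<Sum>ks\<in>{ks. length ks = count_free A}. \<Sum>k'\<in>UNIV. \<Sum>k\<in>UNIV.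
      \<Sum>ks'\<in>{ks. length ks = count_free B}.
        haar_h (fill_left A ks @ (i', k', True) # c @ (i, k, False) # fill_left B ks') *
        \<phi> (fill_right A ks @ (k', j', True) # (k, j, False) # fill_right B ks'))"
    by (rule sum.cong[OF refl]) (simp add: sum_lists_length_Suc fill_append)
  also have "\<dots> = (\<Sum>ks\<in>{ks. length ks = count_free A}. \<Sum>ks'\<in>{ks. length ks = count_free B}.
      \<Sum>k'\<in>UNIV. \<Sum>k\<in>UNIV.
        haar_h (fill_left A ks @ (i', k', True) # c @ (i, k, False) # fill_left B ks') *
        \<phi> (fill_right A ks @ (k', j', True) # (k, j, False) # fill_right B ks'))"
    by (rule sum.cong[OF refl]) (simp add: sum.swap[of _ _ "{ks. length ks = count_free B}"])
  also have "\<dots> = (\<Sum>ks\<in>{ks. length ks = count_free A}. \<Sum>ks'\<in>{ks. length ks = count_free B}.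
        haar_h (fill_left A ks @ (i', j', True) # c @ (i, j, False) # fill_left B ks') *
        \<phi> (fill_right A ks @ fill_right B ks'))"
    by (simp add: sum_haar_h_matched_pair[OF assms])
  also have "\<dots> = partial_conv \<phi> ?R"
    unfolding partial_conv_def count_R sum_lists_length_add by (intro sum.cong refl) (simp add: fill_append)
  finally show ?thesis .
qed

lemma partial_conv_fix_dyck:
  assumes "respects_relations \<phi>"
  shows "dyck D \<Longrightarrow> partial_conv \<phi> (P @ map Free D @ S) = partial_conv \<phi> (P @ map Fixed D @ S)"
proof (induction D arbitrary: P S rule: dyck.induct)
  case (dyck_nest D1 D2 a b c d)
  have "partial_conv \<phi> (P @ map Free (D2 @ [(a, b, True)] @ D1 @ [(c, d, False)]) @ S)
      = partial_conv \<phi> ((P @ map Free D2 @ [Free (a, b, True)]) @ map Free D1 @ Free (c, d, False) # S)"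
    by simp
  also have "\<dots> = partial_conv \<phi> ((P @ map Free D2 @ [Free (a, b, True)]) @ map Fixed D1 @ Free (c, d, False) # S)"
    by (rule dyck_nest.IH(1))
  also have "\<dots> = partial_conv \<phi> ((P @ map Free D2) @ Free (a, b, True) # map Fixed D1 @ Free (c, d, False) # S)"
    by simp
  also have "\<dots> = partial_conv \<phi> ((P @ map Free D2) @ Fixed (a, b, True) # map Fixed D1 @ Fixed (c, d, False) # S)"
    by (rule partial_conv_fix_pair[OF assms dyck_nest.hyps(1)])
  also have "\<dots> = partial_conv \<phi> (P @ map Free D2 @ Fixed (a, b, True) # map Fixed D1 @ Fixed (c, d, False) # S)"
    by simp
  also have "\<dots> = partial_conv \<phi> (P @ map Fixed D2 @ Fixed (a, b, True) # map Fixed D1 @ Fixed (c, d, False) # S)"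
    by (rule dyck_nest.IH(2))
  also have "\<dots> = partial_conv \<phi> (P @ map Fixed (D2 @ [(a, b, True)] @ D1 @ [(c, d, False)]) @ S)"
    by simp
  finally show ?case .
qed simp

section \<open>Rotating a word of degree zero into a Dyck word\<close>

definition suffix_nonneg :: "'n word \<Rightarrow> bool" where
  "suffix_nonneg w \<longleftrightarrow> (\<forall>k. word_deg (drop k w) \<ge> 0)"

lemma suffix_nonneg_Cons: "suffix_nonneg (l # w) \<longleftrightarrow> suffix_nonneg w \<and> word_deg (l # w) \<ge> 0"
  unfolding suffix_nonneg_def
proof (intro iffI conjI allI)
  assume "\<forall>k. 0 \<le> word_deg (drop k (l # w))"
  then show "0 \<le> word_deg (drop k w)" "0 \<le> word_deg (l # w)" for k
    by (metis drop_Suc_Cons, metis drop0)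
next
  assume "(\<forall>k. 0 \<le> word_deg (drop k w)) \<and> 0 \<le> word_deg (l # w)"
  then show "0 \<le> word_deg (drop k (l # w))" for k by (cases k) auto
qed

(* dyck_chain m w: w = D_m u D_(m-1) u ... u D_0 with Dyck words D_i, so j(w) raises the level by m. *)
inductive dyck_chain :: "nat \<Rightarrow> 'n word \<Rightarrow> bool" where
  dyck_chain_0: "dyck D \<Longrightarrow> dyck_chain 0 D"
| dyck_chain_Suc: "dyck D \<Longrightarrow> dyck_chain m w \<Longrightarrow> dyck_chain (Suc m) (D @ [(a, b, False)] @ w)"

lemma dyck_chain_prepend: "dyck_chain m w \<Longrightarrow> dyck E \<Longrightarrow> dyck_chain m (E @ w)"
proof (induction rule: dyck_chain.induct)
  case (dyck_chain_0 D)
  then show ?case by (intro dyck_chain.dyck_chain_0 dyck_append)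
next
  case (dyck_chain_Suc D m w a b)
  then have "dyck_chain (Suc m) ((E @ D) @ [(a, b, False)] @ w)"
    by (intro dyck_chain.dyck_chain_Suc dyck_append)
  then show ?case by simp
qed

lemma dyck_chain_if_suffix_nonneg: "suffix_nonneg w \<Longrightarrow> dyck_chain (nat (word_deg w)) w"
proof (induction w)
  case Nil
  then show ?case by (auto intro: dyck_chain_0 dyck_Nil)
next
  case (Cons l w)
  obtain a b e where l: "l = (a, b, e)" by (cases l)
  have IH: "dyck_chain (nat (word_deg w)) w" and deg: "word_deg (l # w) \<ge> 0"
    using Cons by (auto simp: suffix_nonneg_Cons)
  have "word_deg w \<ge> 0" using Cons.prems unfolding suffix_nonneg_def by (metis drop0 drop_Suc_Cons)
  show ?case
  proof (cases e)
    case False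
    with IH \<open>word_deg w \<ge> 0\<close> show ?thesis
      using dyck_chain_Suc[OF dyck_Nil IH, of a b] by (simp add: l Suc_nat_eq_nat_zadd1 add.commute)
  next
    case True
    then have "word_deg (l # w) = word_deg w - 1" by (simp add: l)
    with deg obtain m where m: "nat (word_deg w) = Suc m" "nat (word_deg (l # w)) = m"
      by (intro that[of "nat (word_deg w) - 1"]) auto
    from IH[unfolded m(1)] obtain D a' b' w' where
      w: "w = D @ [(a', b', False)] @ w'" and "dyck D" and "dyck_chain m w'"
      by (cases rule: dyck_chain.cases) auto
    have "dyck ([] @ [(a, b, True)] @ D @ [(a', b', False)])"
      by (rule dyck_nest[OF \<open>dyck D\<close> dyck_Nil])
    with \<open>dyck_chain m w'\<close> have "dyck_chain m (([] @ [(a, b, True)] @ D @ [(a', b', False)]) @ w')"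
      by (rule dyck_chain_prepend)
    then show ?thesis using True l w m(2) by simp
  qed
qed

lemma dyck_if_suffix_nonneg: "suffix_nonneg w \<Longrightarrow> word_deg w = 0 \<Longrightarrow> dyck w"
  using dyck_chain_if_suffix_nonneg[of w] by (auto elim: dyck_chain.cases)

lemma drop_take_append_drop: "i \<le> k \<Longrightarrow> drop i (take k w) @ drop k w = drop i w"
proof -
  assume "i \<le> k"
  then have "drop k w = drop (k - i) (drop i w)" by simp
  moreover have "drop i (take k w) = take (k - i) (drop i w)" by (simp add: drop_take)
  ultimately show ?thesis by (simp only: append_take_drop_id)
qed

lemma suffix_nonneg_rotate_at_min:
  assumes "word_deg w = 0" "k0 \<le> length w"
    and min: "\<And>k. k \<le> length w \<Longrightarrow> word_deg (drop k0 w) \<le> word_deg (drop k w)"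
  shows "suffix_nonneg (drop k0 w @ take k0 w)"
  unfolding suffix_nonneg_def
proof
  fix j
  let ?x = "take k0 w" and ?y = "drop k0 w"
  have deg_x: "word_deg ?x = - word_deg ?y"
    using assms(1) word_deg_simps(3)[of ?x ?y] by simp
  show "word_deg (drop j (?y @ ?x)) \<ge> 0"
  proof (cases "j \<le> length ?y")
    case True
    then have "word_deg (drop j (?y @ ?x)) = word_deg (drop (k0 + j) w) - word_deg ?y"
      by (simp add: deg_x add.commute)
    with True assms(2) min[of "k0 + j"] show ?thesis by simp
  next
    case False
    define i where "i = min (j - length ?y) k0"
    have "drop j (?y @ ?x) = drop i ?x"
      using False by (auto simp: i_def min_def)
    moreover have "drop i ?x @ ?y = drop i w"
      by (rule drop_take_append_drop) (simp add: i_def)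
    ultimately have "word_deg (drop j (?y @ ?x)) + word_deg ?y = word_deg (drop i w)"
      by (metis word_deg_simps(3))
    moreover have "i \<le> length w" using assms(2) by (simp add: i_def)
    ultimately show ?thesis using min[of i] by linarith
  qed
qed

lemma exists_rotation_suffix_nonneg:
  assumes "word_deg w = 0"
  obtains x y where "w = x @ y" "suffix_nonneg (y @ x)"
proof -
  define k0 where "k0 = arg_min_on (\<lambda>k. word_deg (drop k w)) {..length w}"
  have "k0 \<le> length w" "\<And>k. k \<le> length w \<Longrightarrow> word_deg (drop k0 w) \<le> word_deg (drop k w)"
    using arg_min_if_finite[of "{..length w}" "\<lambda>k. word_deg (drop k w)"] by (auto simp: k0_def not_less)
  then have "suffix_nonneg (drop k0 w @ take k0 w)"
    by (rule suffix_nonneg_rotate_at_min[OF assms])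
  then show ?thesis by (intro that[of "take k0 w" "drop k0 w"]) simp_all
qed

lemma tconv_append:
  "tconv \<psi> \<phi> (x @ y) = (\<Sum>ks\<in>{ks. length ks = length x}. \<Sum>ks'\<in>{ks. length ks = length y}.
     \<psi> (map2 with_second_index x ks @ map2 with_second_index y ks') *
     \<phi> (map2 with_first_index x ks @ map2 with_first_index y ks'))"
  unfolding tconv_def length_append sum_lists_length_add
  by (intro sum.cong refl) simp

lemma tconv_commute:
  assumes "tracial \<psi>" "tracial \<phi>"
  shows "tconv \<psi> \<phi> (x @ y) = tconv \<psi> \<phi> (y @ x)"
proof -
  have "\<psi> (a @ b) = \<psi> (b @ a)" "\<phi> (a @ b) = \<phi> (b @ a)" for a b
    using assms unfolding tracial_def by auto
  then show ?thesis
    unfolding tconv_append by (subst sum.swap) simp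
qed

lemma word_deg_map2_with_second_index:
  "length ks = length w \<Longrightarrow> word_deg (map2 with_second_index w ks) = word_deg w"
proof (induction w arbitrary: ks)
  case (Cons l w)
  then show ?case by (cases l, cases ks) auto
qed simp

lemma tconv_haar_h_left:
  assumes "respects_relations \<phi>" "tracial \<phi>" "\<phi> [] = 1"
  shows "tconv haar_h \<phi> w = haar_h w"
proof (cases "word_deg w = 0")
  case False
  then have "tconv haar_h \<phi> w = 0"
    unfolding tconv_def by (intro sum.neutral) (auto simp: haar_h_eq word_deg_map2_with_second_index)
  with False show ?thesis by (simp add: haar_h_eq)
next
  case True
  then obtain x y where w: "w = x @ y" and nonneg: "suffix_nonneg (y @ x)"
    by (rule exists_rotation_suffix_nonneg)
  have "dyck (y @ x)"
    using dyck_if_suffix_nonneg[OF nonneg] True by (simp add: w add.commute)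
  have "tconv haar_h \<phi> w = tconv haar_h \<phi> (y @ x)"
    unfolding w by (rule tconv_commute[OF tracial_haar_h assms(2)])
  also have "\<dots> = partial_conv \<phi> ([] @ map Free (y @ x) @ [])"
    by (simp only: append_Nil append_Nil2 partial_conv_Free)
  also have "\<dots> = partial_conv \<phi> ([] @ map Fixed (y @ x) @ [])"
    by (rule partial_conv_fix_dyck[OF assms(1) \<open>dyck (y @ x)\<close>])
  also have "\<dots> = haar_h (y @ x)"
    using partial_conv_Fixed[of \<phi> "y @ x"] assms(3) by simp
  also have "\<dots> = haar_h w"
    unfolding w by (rule haar_h_commute)
  finally show ?thesis .
qed

section \<open>The anti-automorphism u_ij \<mapsto> u_ji\<close>

fun letter_swap :: "'n letter \<Rightarrow> 'n letter" where
  "letter_swap (i, j, e) = (j, i, e)"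

definition word_flip :: "'n word \<Rightarrow> 'n word" where
  "word_flip w = rev (map letter_swap w)"

lemma word_flip_simps [simp]:
  "word_flip [] = []" "word_flip (l # w) = word_flip w @ [letter_swap l]"
  "word_flip (v @ w) = word_flip w @ word_flip v"
  by (simp_all add: word_flip_def)

lemma length_word_flip [simp]: "length (word_flip w) = length w"
  by (simp add: word_flip_def)

lemma letter_swap_swap [simp]: "letter_swap (letter_swap l) = l"
  by (cases l) auto

lemma word_flip_flip [simp]: "word_flip (word_flip w) = w"
  by (simp add: word_flip_def rev_map comp_def)

lemma word_deg_flip [simp]: "word_deg (word_flip w) = word_deg w"
proof (induction w)
  case (Cons l w) then show ?case by (cases l) auto
qed simp

lemma respects_relations_flip: "respects_relations \<phi> \<Longrightarrow> respects_relations (\<lambda>w. \<phi> (word_flip w))"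
  unfolding respects_relations_def by simp

lemma tracial_flip: "tracial \<phi> \<Longrightarrow> tracial (\<lambda>w. \<phi> (word_flip w))"
  unfolding tracial_def by simp

lemma letter_factor_swap:
  "letter_factor (letter_swap l) k m = transpose (letter_factor l (- k - letter_deg l) (- m - 1))"
  by (cases l) (auto simp: transpose_matunit)

lemma word_factors_flip: "word_factors (word_flip w) k m = transpose (word_factors w (- k - word_deg w) (- m - 1))"
proof (induction w arbitrary: k)
  case (Cons l w)
  have "word_factors (word_flip (l # w)) k m =
      word_factors (word_flip w) (k + letter_deg l) m ** letter_factor (letter_swap l) k m"
    by (cases l) (simp add: word_factors_append)
  also have "\<dots> = transpose (word_factors (l # w) (- k - word_deg (l # w)) (- m - 1))"
    by (simp add: Cons letter_factor_swap matrix_transpose_mul algebra_simps)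
  finally show ?case .
qed simp

lemma haar_h_flip: "haar_h (word_flip w) = haar_h w"
proof (cases "word_deg w = 0")
  case True
  have "trace_prod (\<lambda>m. transpose (word_factors w 0 (- m - 1))) = trace_prod (word_factors w 0)"
    unfolding trace_prod_def
    by (rule prod.reindex_bij_witness[of _ "\<lambda>m. - m - 1" "\<lambda>m. - m - 1"])
      (auto simp: trace_transpose)
  with True show ?thesis by (simp add: haar_h_eq word_factors_flip[abs_def])
qed (simp add: haar_h_eq)

lemma map2_rev: "length ks = length w \<Longrightarrow> map2 f (rev w) (rev ks) = rev (map2 f w ks)"
  by (simp add: zip_rev rev_map)

lemma map2_letter_swap:
  "length ks = length w \<Longrightarrow>
     map2 with_second_index (map letter_swap w) ks = map letter_swap (map2 with_first_index w ks)"
  "length ks = length w \<Longrightarrow>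
     map2 with_first_index (map letter_swap w) ks = map letter_swap (map2 with_second_index w ks)"
proof (induction w arbitrary: ks)
  case (Cons l w)
  {
    case 1 then show ?case using Cons(1) by (cases l, cases ks) auto
  next
    case 2 then show ?case using Cons(2) by (cases l, cases ks) auto
  }
qed simp_all

lemma tconv_flip: "tconv \<phi> \<psi> (word_flip w) = tconv (\<lambda>v. \<psi> (word_flip v)) (\<lambda>v. \<phi> (word_flip v)) w"
proof -
  have "tconv \<phi> \<psi> (word_flip w) = (\<Sum>ks\<in>{ks. length ks = length w}.
      \<phi> (map2 with_second_index (word_flip w) (rev ks)) * \<psi> (map2 with_first_index (word_flip w) (rev ks)))"
    unfolding tconv_def by (rule sum.reindex_bij_witness[of _ rev rev]) auto
  also have "\<dots> = tconv (\<lambda>v. \<psi> (word_flip v)) (\<lambda>v. \<phi> (word_flip v)) w"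
    unfolding tconv_def
    by (intro sum.cong refl) (simp add: word_flip_def map2_rev map2_letter_swap mult.commute)
  finally show ?thesis .
qed

lemma tconv_haar_h_right:
  assumes "respects_relations \<phi>" "tracial \<phi>" "\<phi> [] = 1"
  shows "tconv \<phi> haar_h w = haar_h w"
proof -
  have "tconv \<phi> haar_h w = tconv haar_h (\<lambda>v. \<phi> (word_flip v)) (word_flip w)"
    using tconv_flip[of \<phi> haar_h "word_flip w"] by (simp add: haar_h_flip)
  also have "\<dots> = haar_h w"
    using tconv_haar_h_left[OF respects_relations_flip[OF assms(1)] tracial_flip[OF assms(2)]] assms(3)
    by (simp add: haar_h_flip)
  finally show ?thesis .
qed

theorem mainTheorem10:
  shows "is_state (haar_h :: ('n::finite) functional) \<and> tracial (haar_h :: 'n functional) \<and>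
    (\<forall>\<phi> :: 'n functional. is_state \<phi> \<and> tracial \<phi> \<longrightarrow> tconv haar_h \<phi> = haar_h) \<and>
    is_tensor_haar_trace (haar_h :: 'n functional)"
  using is_state_haar_h tracial_haar_h tconv_haar_h_left tconv_haar_h_right
  unfolding is_tensor_haar_trace_def is_state_def by blast

end
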